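(* Let $N\ge 1$, let $a_1,\dots,a_N>0$ and $T_1,\dots,T_N\ge 0$. For $P_{\mathrm{tot}}>0$ let $J^*(P_{\mathrm{tot}};T_1,\dots,T_N)$ denote the minimum of $\sum_{i=1}^N(\log_2(1+a_iP_i)-T_i)^2$ over all $P_1,\dots,P_N\ge 0$ with $\sum_i P_i\le P_{\mathrm{tot}}$, and let $\bar P_i=(2^{T_i}-1)/a_i$. Then $J^*$ is nonincreasing in $P_{\mathrm{tot}}$, equals $0$ at $P_{\mathrm{tot}}=\sum_i\bar P_i$ (when this sum is positive) and for all $P_{\mathrm{tot}}\ge\sum_i\bar P_i$. Moreover, for fixed $P_{\mathrm{tot}}$, $J^*$ is nondecreasing in each target $T_i$ (over $T_i\ge 0$, the other data fixed). *)

theory Defs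
  imports Complex_Main
begin

definition Jobj :: "nat \<Rightarrow> (nat \<Rightarrow> real) \<Rightarrow> (nat \<Rightarrow> real) \<Rightarrow> (nat \<Rightarrow> real) \<Rightarrow> real" where
  "Jobj N a T p = (\<Sum>i=1..N. (log 2 (1 + a i * p i) - T i)^2)"

text \<open>Optimal value J*(Ptot; T): infimum (= minimum, attained by compactness) of the
  objective over the feasible set.\<close>
definition Jstar :: "nat \<Rightarrow> (nat \<Rightarrow> real) \<Rightarrow> (nat \<Rightarrow> real) \<Rightarrow> real \<Rightarrow> real" where
  "Jstar N a T Ptot = Inf {Jobj N a T p | p. (\<forall>i\<in>{1..N}. 0 \<le> p i) \<and> (\<Sum>i=1..N. p i) \<le> Ptot}"

definition Pbar :: "(nat \<Rightarrow> real) \<Rightarrow> (nat \<Rightarrow> real) \<Rightarrow> nat \<Rightarrow> real" where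
  "Pbar a T i = (2 powr T i - 1) / a i"

end

theory Submission
  imports Defs
begin

text \<open>Monotonicity in the budget holds because the feasible sets are nested. At the budget
  \<open>\<Sum>i. Pbar a T i\<close> the allocation \<open>Pbar a T\<close> meets every target exactly, so the optimum
  is \<open>0\<close> there and beyond. For monotonicity in a target, lower \<open>T i\<close> from \<open>t\<close> to \<open>s\<close>
  and take any allocation \<open>p\<close>: if its rate on channel \<open>i\<close> is at most \<open>s\<close>, the residual on
  channel \<open>i\<close> only shrinks; otherwise cut \<open>p i\<close> down to the power that achieves rate
  exactly \<open>s\<close>, which stays feasible and makes that residual vanish.\<close>

definition power_allocations :: "nat \<Rightarrow> real \<Rightarrow> (nat \<Rightarrow> real) set" where
  "power_allocations N P = {p. (\<forall>i\<in>{1..N}. 0 \<le> p i) \<and> (\<Sum>i=1..N. p i) \<le> P}"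

lemma Jstar_eq_Inf_image: "Jstar N a T P = Inf (Jobj N a T ` power_allocations N P)"
  unfolding Jstar_def power_allocations_def by (rule arg_cong[where f = Inf]) blast

lemma power_allocations_mono: "P \<le> Q \<Longrightarrow> power_allocations N P \<subseteq> power_allocations N Q"
  unfolding power_allocations_def by auto

lemma zero_in_power_allocations: "0 \<le> P \<Longrightarrow> (\<lambda>_. 0) \<in> power_allocations N P"
  unfolding power_allocations_def by simp

lemma Jobj_nonneg: "0 \<le> Jobj N a T p"
  unfolding Jobj_def by (intro sum_nonneg) auto

lemma bdd_below_Jobj_image: "bdd_below (Jobj N a T ` A)"
  by (rule bdd_belowI2[of _ 0]) (rule Jobj_nonneg)

lemma Jstar_nonneg: "0 \<le> P \<Longrightarrow> 0 \<le> Jstar N a T P"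
  unfolding Jstar_eq_Inf_image
  by (rule cInf_greatest) (use zero_in_power_allocations in \<open>auto simp: Jobj_nonneg\<close>)

lemma Jstar_le_Jobj: "p \<in> power_allocations N P \<Longrightarrow> Jstar N a T P \<le> Jobj N a T p"
  unfolding Jstar_eq_Inf_image by (rule cInf_lower[OF imageI bdd_below_Jobj_image])

lemma Jstar_antimono:
  assumes "0 \<le> P" "P \<le> Q"
  shows "Jstar N a T Q \<le> Jstar N a T P"
  unfolding Jstar_eq_Inf_image
proof (rule cInf_superset_mono)
  show "Jobj N a T ` power_allocations N P \<noteq> {}"
    using zero_in_power_allocations[OF assms(1)] by blast
  show "Jobj N a T ` power_allocations N P \<subseteq> Jobj N a T ` power_allocations N Q"
    using power_allocations_mono[OF assms(2)] by blast
qed (rule bdd_below_Jobj_image)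

lemma log_rate_Pbar: "a i \<noteq> 0 \<Longrightarrow> log 2 (1 + a i * Pbar a T i) = T i"
  unfolding Pbar_def by simp

lemma Pbar_nonneg: "0 < a i \<Longrightarrow> 0 \<le> T i \<Longrightarrow> 0 \<le> Pbar a T i"
  unfolding Pbar_def by (simp add: ge_one_powr_ge_zero)

lemma Pbar_le_iff_le_log_rate:
  assumes "0 < a i" "0 \<le> p"
  shows "Pbar a T i \<le> p \<longleftrightarrow> T i \<le> log 2 (1 + a i * p)"
proof -
  have "0 < 1 + a i * p"
    using assms by (simp add: add_pos_nonneg)
  then have "T i \<le> log 2 (1 + a i * p) \<longleftrightarrow> 2 powr T i \<le> 1 + a i * p"
    by (simp add: le_log_iff)
  then show ?thesis
    using assms(1) by (simp add: Pbar_def divide_le_eq algebra_simps)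
qed

lemma Jobj_Pbar: "\<forall>i\<in>{1..N}. 0 < a i \<Longrightarrow> Jobj N a T (Pbar a T) = 0"
  unfolding Jobj_def by (intro sum.neutral) (auto simp: log_rate_Pbar)

lemma Jstar_eq_0_if_sum_Pbar_le:
  assumes "\<forall>i\<in>{1..N}. 0 < a i" "\<forall>i\<in>{1..N}. 0 \<le> T i"
    and "(\<Sum>i=1..N. Pbar a T i) \<le> P"
  shows "Jstar N a T P = 0"
proof (rule antisym)
  have Pbar_feasible: "Pbar a T \<in> power_allocations N P"
    using assms by (auto simp: power_allocations_def Pbar_nonneg)
  show "Jstar N a T P \<le> 0"
    using Jstar_le_Jobj[OF Pbar_feasible, of a T] Jobj_Pbar[OF assms(1), of T] by simp
  have "0 \<le> P"
    using assms(3) sum_nonneg[of "{1..N}" "Pbar a T"] assms(1,2) Pbar_nonneg by fastforce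
  then show "0 \<le> Jstar N a T P"
    by (rule Jstar_nonneg)
qed

lemma power2_diff_le_power2_diff_of_le: "(x::real) \<le> s \<Longrightarrow> s \<le> t \<Longrightarrow> (x - s)\<^sup>2 \<le> (x - t)\<^sup>2"
  using power_mono[of "s - x" "t - x" 2] by (simp add: power2_commute)

lemma Jobj_lower_target_le:
  assumes i: "i \<in> {1..N}" and a: "0 < a i" and st: "0 \<le> s" "s \<le> t"
    and p: "p \<in> power_allocations N P"
  obtains q where "q \<in> power_allocations N P" "Jobj N a (T(i := s)) q \<le> Jobj N a (T(i := t)) p"
proof (cases "log 2 (1 + a i * p i) \<le> s")
  case True
  have "Jobj N a (T(i := s)) p \<le> Jobj N a (T(i := t)) p"
    unfolding Jobj_def using True st by (intro sum_mono) (simp add: power2_diff_le_power2_diff_of_le)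
  with p show ?thesis by (rule that)
next
  case False
  define q where "q = p(i := Pbar a (T(i := s)) i)"
  have p_nonneg: "\<forall>j\<in>{1..N}. 0 \<le> p j" and p_sum: "(\<Sum>j=1..N. p j) \<le> P"
    using p by (auto simp: power_allocations_def)
  have "Pbar a (T(i := s)) i \<le> p i"
    using False a p_nonneg i by (simp add: Pbar_le_iff_le_log_rate)
  then have "(\<Sum>j=1..N. q j) \<le> (\<Sum>j=1..N. p j)"
    by (intro sum_mono) (simp add: q_def)
  moreover have "\<forall>j\<in>{1..N}. 0 \<le> q j"
    using p_nonneg a st Pbar_nonneg[of a i "T(i := s)"] by (simp add: q_def)
  ultimately have "q \<in> power_allocations N P"
    using p_sum by (simp add: power_allocations_def)
  moreover have "Jobj N a (T(i := s)) q \<le> Jobj N a (T(i := t)) p"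
    unfolding Jobj_def
  proof (intro sum_mono)
    fix j
    show "(log 2 (1 + a j * q j) - (T(i := s)) j)\<^sup>2 \<le> (log 2 (1 + a j * p j) - (T(i := t)) j)\<^sup>2"
      using log_rate_Pbar[of a i "T(i := s)"] a by (cases "j = i") (simp_all add: q_def)
  qed
  ultimately show ?thesis by (rule that)
qed

lemma Jstar_mono_target:
  assumes "i \<in> {1..N}" "0 < a i" "0 \<le> P" "0 \<le> s" "s \<le> t"
  shows "Jstar N a (T(i := s)) P \<le> Jstar N a (T(i := t)) P"
  unfolding Jstar_eq_Inf_image
proof (rule cInf_mono)
  show "Jobj N a (T(i := t)) ` power_allocations N P \<noteq> {}"
    using zero_in_power_allocations[OF assms(3)] by blast
  fix b assume "b \<in> Jobj N a (T(i := t)) ` power_allocations N P"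
  then obtain p where "p \<in> power_allocations N P" "b = Jobj N a (T(i := t)) p"
    by blast
  with Jobj_lower_target_le[of i N a s t p P T] assms
  show "\<exists>c\<in>Jobj N a (T(i := s)) ` power_allocations N P. c \<le> b"
    by (metis image_eqI)
qed (rule bdd_below_Jobj_image)

theorem corollary1:
  fixes N :: nat and a T :: "nat \<Rightarrow> real"
  assumes "N \<ge> 1"
    and "\<forall>i\<in>{1..N}. a i > 0"
    and "\<forall>i\<in>{1..N}. T i \<ge> 0"
  shows "(\<forall>P Q. 0 < P \<and> P \<le> Q \<longrightarrow> Jstar N a T Q \<le> Jstar N a T P)
    \<and> ((\<Sum>i=1..N. Pbar a T i) > 0 \<longrightarrow> Jstar N a T (\<Sum>i=1..N. Pbar a T i) = 0)
    \<and> (\<forall>P. 0 < P \<and> (\<Sum>i=1..N. Pbar a T i) \<le> P \<longrightarrow> Jstar N a T P = 0)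
    \<and> (\<forall>P > 0. \<forall>i\<in>{1..N}. \<forall>s t. 0 \<le> s \<and> s \<le> t \<longrightarrow>
          Jstar N a (T(i := s)) P \<le> Jstar N a (T(i := t)) P)"
proof (intro conjI allI impI ballI)
  fix P Q :: real
  assume "0 < P \<and> P \<le> Q"
  then show "Jstar N a T Q \<le> Jstar N a T P"
    by (intro Jstar_antimono) auto
next
  show "Jstar N a T (\<Sum>i=1..N. Pbar a T i) = 0"
    using assms(2,3) by (rule Jstar_eq_0_if_sum_Pbar_le) simp
next
  fix P :: real
  assume "0 < P \<and> (\<Sum>i=1..N. Pbar a T i) \<le> P"
  then show "Jstar N a T P = 0"
    using assms(2,3) by (intro Jstar_eq_0_if_sum_Pbar_le) auto
next
  fix P s t :: real and i
  assume "P > 0" "i \<in> {1..N}" "0 \<le> s \<and> s \<le> t"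
  then show "Jstar N a (T(i := s)) P \<le> Jstar N a (T(i := t)) P"
    using assms(2) by (intro Jstar_mono_target) auto
qed

end
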